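(* Let $n\ge1$, let $w_{ij}\ge0$ for distinct $i,j\in\{1,\dots,n\}$, and for $a\in\{1,2\}^n$ let $W(a)=\sum_{i=1}^n\sum_{j:a_j\ne a_i}w_{ij}$. Let $a^*\in\arg\max_{a\in\{1,2\}^n}W(a)$. Then for every $a\in\{1,2\}^n$, $$\sum_{i=1}^n\big(W(a)-W(a^*_i,a_{-i})\big)\le 3W(a)-W(a^* ),$$ i.e. the common-interest game with welfare $W$ satisfies the smoothness inequality with $\lambda_c=1$, $\mu_c=3$.
   Context: For $a\in\{1,2\}^n$, $(a^*_i,a_{-i})$ denotes the joint action obtained from $a$ by replacing the $i$-th coordinate $a_i$ with $a^*_i$. *)

theory Defs
  imports "HOL-Library.FuncSet" Complex_Main
begin

definition welfare :: "nat \<Rightarrow> (nat \<Rightarrow> nat \<Rightarrow> real) \<Rightarrow> (nat \<Rightarrow> nat) \<Rightarrow> real" where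
  "welfare n w a = (\<Sum>i\<in>{1..n}. \<Sum>j\<in>{j\<in>{1..n}. a j \<noteq> a i}. w i j)"

end

theory Submission
  imports Defs
begin

text \<open>The welfare is a sum over edges (p, q) of w p q times the indicator that the edge is cut.
  For a single edge only the deviations of p and q matter, and the resulting inequality is
  the triangle inequality of the discrete metric: if a p = a q then
  [b p \<noteq> b q] \<le> [b p \<noteq> a p] + [a q \<noteq> b q]. Hence the bound holds for every profile b, in
  particular without using that astar maximises the welfare or that actions are binary.\<close>

definition cut_weight :: "('i \<Rightarrow> 'i \<Rightarrow> real) \<Rightarrow> ('i \<Rightarrow> 'b) \<Rightarrow> 'i \<Rightarrow> 'i \<Rightarrow> real" where
  "cut_weight w a p q = (if a q \<noteq> a p then w p q else 0)"

lemma welfare_eq_sum_cut_weight: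
  "welfare n w a = (\<Sum>p\<in>{1..n}. \<Sum>q\<in>{1..n}. cut_weight w a p q)"
proof -
  have "(\<Sum>q\<in>{q \<in> {1..n}. a q \<noteq> a p}. w p q) = (\<Sum>q\<in>{1..n}. cut_weight w a p q)" for p
    by (simp add: sum.inter_filter[symmetric] cut_weight_def)
  then show ?thesis unfolding welfare_def by simp
qed

lemma cut_weight_deviations_le:
  assumes "p \<noteq> q" and "w p q \<ge> 0"
  shows "(cut_weight w a p q - cut_weight w (a(p := b p)) p q)
           + (cut_weight w a p q - cut_weight w (a(q := b q)) p q)
         \<le> 3 * cut_weight w a p q - cut_weight w b p q"
  using assms by (auto simp: cut_weight_def)

lemma sum_cut_weight_deviations_le:
  assumes "finite I" and "p \<in> I" and "q \<in> I" and "p \<noteq> q \<Longrightarrow> w p q \<ge> 0"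
  shows "(\<Sum>i\<in>I. cut_weight w a p q - cut_weight w (a(i := b i)) p q)
         \<le> 3 * cut_weight w a p q - cut_weight w b p q"
proof (cases "p = q")
  case True
  then show ?thesis by (simp add: cut_weight_def)
next
  case False
  have "(\<Sum>i\<in>I. cut_weight w a p q - cut_weight w (a(i := b i)) p q)
      = (\<Sum>i\<in>{p, q}. cut_weight w a p q - cut_weight w (a(i := b i)) p q)"
    by (rule sum.mono_neutral_right) (use assms in \<open>auto simp: cut_weight_def\<close>)
  also have "\<dots> \<le> 3 * cut_weight w a p q - cut_weight w b p q"
    using cut_weight_deviations_le[of p q w a b, OF False assms(4)[OF False]] False by (simp add: algebra_simps)
  finally show ?thesis .
qed

lemma sum_welfare_deviations_le:
  assumes "\<And>p q. p \<in> {1..n} \<Longrightarrow> q \<in> {1..n} \<Longrightarrow> p \<noteq> q \<Longrightarrow> w p q \<ge> 0"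
  shows "(\<Sum>i\<in>{1..n}. welfare n w a - welfare n w (a(i := b i)))
         \<le> 3 * welfare n w a - welfare n w b"
proof -
  have "(\<Sum>i\<in>{1..n}. welfare n w a - welfare n w (a(i := b i)))
      = (\<Sum>i\<in>{1..n}. \<Sum>p\<in>{1..n}. \<Sum>q\<in>{1..n}.
           cut_weight w a p q - cut_weight w (a(i := b i)) p q)"
    by (simp add: welfare_eq_sum_cut_weight sum_subtractf)
  also have "\<dots> = (\<Sum>p\<in>{1..n}. \<Sum>q\<in>{1..n}. \<Sum>i\<in>{1..n}.
           cut_weight w a p q - cut_weight w (a(i := b i)) p q)"
    by (subst sum.swap) (rule sum.cong[OF refl], rule sum.swap)
  also have "\<dots> \<le> (\<Sum>p\<in>{1..n}. \<Sum>q\<in>{1..n}. 3 * cut_weight w a p q - cut_weight w b p q)"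
    by (intro sum_mono sum_cut_weight_deviations_le) (auto intro: assms)
  also have "\<dots> = 3 * welfare n w a - welfare n w b"
    by (simp add: welfare_eq_sum_cut_weight sum_subtractf sum_distrib_left)
  finally show ?thesis .
qed

theorem mainTheorem8:
  fixes n :: nat and w :: "nat \<Rightarrow> nat \<Rightarrow> real" and astar :: "nat \<Rightarrow> nat"
  assumes "n \<ge> 1"
    and "\<And>i j. i \<in> {1..n} \<Longrightarrow> j \<in> {1..n} \<Longrightarrow> i \<noteq> j \<Longrightarrow> w i j \<ge> 0"
    and "astar \<in> {1..n} \<rightarrow>\<^sub>E {1,2}"
    and "\<And>a. a \<in> {1..n} \<rightarrow>\<^sub>E {1,2} \<Longrightarrow> welfare n w a \<le> welfare n w astar"
  shows "\<forall>a \<in> {1..n} \<rightarrow>\<^sub>E {1::nat,2}.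
           (\<Sum>i\<in>{1..n}. welfare n w a - welfare n w (a(i := astar i)))
             \<le> 3 * welfare n w a - welfare n w astar"
  using sum_welfare_deviations_le[of n w, OF assms(2)] by blast

end
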